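(* Let $n>0$ be an integer and $\alpha$ a dipath on $\vec{|\square[n]|}$ (whose underlying space is $\mathbb{I}^n$). For $x\in\mathbb{I}^n$ let $v(x)\in\{0,1\}^n$ be the vertex with coordinates $v(x)_i=1$ if $x_i=1$ and $v(x)_i=0$ otherwise (equivalently $v(x)=\mathrm{supp}(x)_*(0,\ldots,0)$). Then there is a dipath $\beta$ on $\vec{|\square[n]|}$ from $v(\alpha(0))$ to $v(\alpha(1))$ such that $U(\beta)$ is cellular (it maps $\{0,1\}$ to vertices and $[0,1]$ into the union of the edges of the cube). Moreover, if $\alpha(0)$ and $\alpha(1)$ lie in the boundary $\partial\mathbb{I}^n$ (points having some coordinate equal to $0$ or $1$) and $\alpha(\tfrac12)$ lies in the interior $(0,1)^n$, then $\beta$ is non-constant.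
   Context: Streams: a circulation on a space $X$ assigns to each open $V\subset X$ a preorder $\leqslant_V$ such that for every collection $\mathcal{O}$ of open sets, $\leqslant_{\bigcup\mathcal{O}}$ is the preorder with smallest graph containing $\bigcup_{V\in\mathcal{O}}\mathrm{graph}(\leqslant_V)$; a stream is a space with a circulation; a stream map $f:X\to Y$ is continuous with $f(x)\leqslant_V f(y)$ whenever $x\leqslant_{f^{-1}V}y$; $U$ is the forgetful functor to spaces. $\vec\square[1]$ is $[0,1]$ with circulation $x\leqslant_V y$ iff $x\le y$ and $[x,y]\subset V$; a dipath is a stream map from $\vec\square[1]$. $\square[n]=\square(-,[1]^n)$ is the representable precubical set, where $\square$ is the smallest subcategory of posets and monotone maps closed under cartesian products containing $\delta_\pm:\{0\}\to\{0<1\}$. Its stream realization $\vec{|\square[n]|}$ is the stream $\vec\square[n]$, the $n$-fold product of $\vec\square[1]$ in streams, with underlying space $\mathbb{I}^n$ (CW structure: the standard cubical cells) and $\leqslant_{\mathbb{I}^n}$ the coordinatewise order. $[0,1]$ has CW structure with vertices $0,1$. *)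

theory Defs
  imports "HOL-Analysis.Analysis"
begin

text \<open>A circulation on a space X: to each open V a preorder on V (given as a relation
C V, which is empty for non-open V); for every family O of open sets, the relation on
the union is the smallest preorder on the union containing all the relations C V, V in O.\<close>
definition circulation :: "'a topology \<Rightarrow> ('a set \<Rightarrow> 'a \<Rightarrow> 'a \<Rightarrow> bool) \<Rightarrow> bool" where
  "circulation X C \<longleftrightarrow>
     (\<forall>V x y. C V x y \<longrightarrow> openin X V \<and> x \<in> V \<and> y \<in> V) \<and>
     (\<forall>\<O>. (\<forall>V\<in>\<O>. openin X V) \<longrightarrow>
        {(x, y). C (\<Union>\<O>) x y} = (Id_on (\<Union>\<O>) \<union> (\<Union>V\<in>\<O>. {(x, y). C V x y}))\<^sup>+)"

definition stream_map ::
  "'a topology \<Rightarrow> ('a set \<Rightarrow> 'a \<Rightarrow> 'a \<Rightarrow> bool) \<Rightarrow> 'b topology \<Rightarrow> ('b set \<Rightarrow> 'b \<Rightarrow> 'b \<Rightarrow> bool)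
     \<Rightarrow> ('a \<Rightarrow> 'b) \<Rightarrow> bool" where
  "stream_map X CX Y CY f \<longleftrightarrow> continuous_map X Y f \<and>
     (\<forall>V x y. openin Y V \<longrightarrow> CX (f -` V \<inter> topspace X) x y \<longrightarrow> CY V (f x) (f y))"

definition dint_top :: "real topology" where
  "dint_top = top_of_set {0..1}"

definition dint_circ :: "real set \<Rightarrow> real \<Rightarrow> real \<Rightarrow> bool" where
  "dint_circ V x y \<longleftrightarrow> openin dint_top V \<and> x \<le> y \<and> {x..y} \<subseteq> V"

text \<open>The n-cube, n = CARD('n), points in real^'n.\<close>
definition unit_cube :: "(real^'n) set" where
  "unit_cube = {x. \<forall>i. 0 \<le> x$i \<and> x$i \<le> 1}"

definition cube_top :: "(real^'n) topology" where
  "cube_top = top_of_set unit_cube"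

definition product_circ :: "((real^'n) set \<Rightarrow> real^'n \<Rightarrow> real^'n \<Rightarrow> bool) \<Rightarrow> bool" where
  "product_circ C \<longleftrightarrow> circulation cube_top C \<and>
     (\<forall>i. stream_map cube_top C dint_top dint_circ (\<lambda>x. x$i))"

text \<open>The product circulation of n copies of the directed interval (categorical product in
streams): the greatest circulation on the product space for which the projections are
stream maps.\<close>
definition cube_circ :: "(real^'n) set \<Rightarrow> real^'n \<Rightarrow> real^'n \<Rightarrow> bool" where
  "cube_circ = (THE C. product_circ C \<and>
      (\<forall>C'. product_circ C' \<longrightarrow> (\<forall>V x y. C' V x y \<longrightarrow> C V x y)))"

definition dipath :: "(real \<Rightarrow> real^'n) \<Rightarrow> bool" where
  "dipath \<beta> \<longleftrightarrow> stream_map dint_top dint_circ cube_top cube_circ \<beta>"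

definition vtx :: "real^'n \<Rightarrow> real^'n" where
  "vtx x = (\<chi> i. if x$i = 1 then 1 else 0)"

definition cube_vertices :: "(real^'n) set" where
  "cube_vertices = {x. \<forall>i. x$i = 0 \<or> x$i = 1}"

text \<open>Union of the (closed) edges of the cube: the 1-skeleton.\<close>
definition cube_skel1 :: "(real^'n) set" where
  "cube_skel1 = {x \<in> unit_cube. card {i. x$i \<noteq> 0 \<and> x$i \<noteq> 1} \<le> 1}"

definition cellular_path :: "(real \<Rightarrow> real^'n) \<Rightarrow> bool" where
  "cellular_path \<beta> \<longleftrightarrow> \<beta> ` {0, 1} \<subseteq> cube_vertices \<and> \<beta> ` {0..1} \<subseteq> cube_skel1"

definition cube_boundary :: "(real^'n) set" where
  "cube_boundary = {x \<in> unit_cube. \<exists>i. x$i = 0 \<or> x$i = 1}"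

definition cube_interior :: "(real^'n) set" where
  "cube_interior = {x. \<forall>i. 0 < x$i \<and> x$i < 1}"

end

theory Submission
  imports Defs
begin

text \<open>
  The proof rests on an explicit description of the stream structure of the cube.
  Call a pair (a, b) a directed segment in V if a \<le> b coordinatewise and the closed
  segment from a to b lies in V; the segment circulation relates x to y in V when y is
  reachable from x by a chain of directed segments in V.  We show that this circulation
  satisfies the gluing axiom (every directed segment, and more generally every continuous
  coordinatewise monotone path, can be subdivided into small pieces subordinate to a given
  open cover, by a Lebesgue number argument) and makes the projections stream maps, and
  that every circulation with the latter property is contained in it, since relatively
  open subsets of the cube are unions of convex pieces.  Hence it is the product
  circulation, and dipaths on the cube are exactly the continuous coordinatewise monotone
  paths in the cube.

  Given a dipath, its endpoints' vertices v \<le> w are joined by the staircase path that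
  moves the coordinates where v and w differ one after another: it is a monotone
  continuous path in the 1-skeleton, hence a cellular dipath.  Under the boundary and
  interior hypotheses, monotonicity through the interior point alpha(1/2) forces some
  coordinate of the end point to equal 1 while the same coordinate of the start point is
  below 1, so v \<noteq> w and the staircase is not constant.
\<close>

section \<open>Chains along paths subordinate to an open cover\<close>

lemma rtrancl_chain:
  assumes "\<And>k. k < m \<Longrightarrow> (p k, p (Suc k)) \<in> R"
  shows "(p 0, p m) \<in> R\<^sup>*"
  using assms by (induction m) (auto intro: rtrancl_into_rtrancl)

lemma uniform_partition_bounds:
  fixes a b :: real
  assumes ab: "a \<le> b" and k: "k < m"
  shows "a \<le> a + real k * (b - a) / real m"
    and "a + real k * (b - a) / real m \<le> a + real (Suc k) * (b - a) / real m"
    and "a + real (Suc k) * (b - a) / real m \<le> b"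
proof -
  have "0 \<le> real k * (b - a)" "real k * (b - a) \<le> real (Suc k) * (b - a)"
    "real (Suc k) * (b - a) \<le> real m * (b - a)"
    using k ab by (auto intro: mult_right_mono)
  moreover have "real m * (b - a) / real m = b - a" using k by simp
  ultimately show "a \<le> a + real k * (b - a) / real m"
    and "a + real k * (b - a) / real m \<le> a + real (Suc k) * (b - a) / real m"
    and "a + real (Suc k) * (b - a) / real m \<le> b"
    by (smt (verit) divide_nonneg_nonneg divide_right_mono of_nat_0_le_iff)+
qed

text \<open>Lebesgue number argument: a fine enough uniform subdivision of the parameter interval
  has every piece mapped into a single member of a given open cover of the path.\<close>

lemma subdivision_subordinate_to_cover:
  fixes \<gamma> :: "real \<Rightarrow> 'a::topological_space"
  assumes cont: "continuous_on {a..b} \<gamma>" and ab: "a \<le> b"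
    and cover: "\<gamma> ` {a..b} \<subseteq> \<Union>\<U>" and opn: "\<And>U. U \<in> \<U> \<Longrightarrow> open U"
  obtains m :: nat where "0 < m"
    "\<And>k. k < m \<Longrightarrow> \<exists>U\<in>\<U>. \<gamma> ` {a + real k * (b - a) / real m..a + real (Suc k) * (b - a) / real m} \<subseteq> U"
proof -
  define \<T> where "\<T> = {T. open T \<and> (\<exists>U\<in>\<U>. T \<inter> {a..b} \<subseteq> \<gamma> -` U)}"
  have covered: "{a..b} \<subseteq> \<Union>\<T>"
  proof
    fix x assume x: "x \<in> {a..b}"
    then obtain U where U: "U \<in> \<U>" "\<gamma> x \<in> U" using cover by blast
    then obtain T where "open T" "T \<inter> {a..b} = \<gamma> -` U \<inter> {a..b}"
      using cont opn unfolding continuous_on_open_invariant by meson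
    then show "x \<in> \<Union>\<T>" using U x unfolding \<T>_def by blast
  qed
  moreover have "\<T> \<noteq> {}" using covered ab by auto
  ultimately obtain \<delta> where \<delta>: "0 < \<delta>"
    and lebesgue: "\<And>S. S \<subseteq> {a..b} \<Longrightarrow> diameter S < \<delta> \<Longrightarrow> \<exists>T\<in>\<T>. S \<subseteq> T"
    using Lebesgue_number_lemma[OF compact_Icc] by (metis (no_types, lifting) \<T>_def mem_Collect_eq)
  define m :: nat where "m = nat \<lceil>(b - a) / \<delta>\<rceil> + 1"
  have m: "0 < m" "(b - a) / real m < \<delta>"
  proof -
    show "0 < m" by (simp add: m_def)
    have "(b - a) / \<delta> < real m" unfolding m_def by linarith
    then show "(b - a) / real m < \<delta>" using \<delta> \<open>0 < m\<close> by (simp add: field_simps)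
  qed
  define p where "p k = a + real k * (b - a) / real m" for k
  have "\<exists>U\<in>\<U>. \<gamma> ` {p k..p (Suc k)} \<subseteq> U" if k: "k < m" for k
  proof -
    have bounds: "a \<le> p k" "p k \<le> p (Suc k)" "p (Suc k) \<le> b"
      using uniform_partition_bounds[OF ab k] unfolding p_def by auto
    have "diameter {p k..p (Suc k)} = (b - a) / real m"
      using bounds m(1) by (simp add: p_def field_simps)
    then obtain T U where "T \<inter> {a..b} \<subseteq> \<gamma> -` U" "U \<in> \<U>" "{p k..p (Suc k)} \<subseteq> T"
      using lebesgue[of "{p k..p (Suc k)}"] bounds m(2) unfolding \<T>_def by auto
    moreover have "{p k..p (Suc k)} \<subseteq> {a..b}" using bounds by auto
    ultimately have "\<gamma> ` {p k..p (Suc k)} \<subseteq> U" by auto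
    then show ?thesis using \<open>U \<in> \<U>\<close> by blast
  qed
  then show ?thesis using that m(1) unfolding p_def by blast
qed

lemma path_chain_by_cover:
  fixes \<gamma> :: "real \<Rightarrow> 'a::topological_space"
  assumes cont: "continuous_on {a..b} \<gamma>" and ab: "a \<le> b"
    and cover: "\<gamma> ` {a..b} \<subseteq> \<Union>\<U>" and opn: "\<And>U. U \<in> \<U> \<Longrightarrow> open U"
    and step: "\<And>u w U. a \<le> u \<Longrightarrow> u \<le> w \<Longrightarrow> w \<le> b \<Longrightarrow> U \<in> \<U> \<Longrightarrow> \<gamma> ` {u..w} \<subseteq> U
                 \<Longrightarrow> (\<gamma> u, \<gamma> w) \<in> R"
  shows "(\<gamma> a, \<gamma> b) \<in> R\<^sup>*"
proof -
  obtain m :: nat where m: "0 < m" and fine: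
    "\<And>k. k < m \<Longrightarrow> \<exists>U\<in>\<U>. \<gamma> ` {a + real k * (b - a) / real m..a + real (Suc k) * (b - a) / real m} \<subseteq> U"
    using subdivision_subordinate_to_cover[OF cont ab cover opn] by blast
  define p where "p k = a + real k * (b - a) / real m" for k
  have "(\<gamma> (p k), \<gamma> (p (Suc k))) \<in> R" if k: "k < m" for k
    using step[OF uniform_partition_bounds[OF ab k]] fine[OF k] unfolding p_def by blast
  then have "(\<gamma> (p 0), \<gamma> (p m)) \<in> R\<^sup>*" by (rule rtrancl_chain)
  moreover have "p 0 = a" "p m = b" using m by (auto simp: p_def)
  ultimately show ?thesis by simp
qed

lemma topspace_cube_top: "topspace cube_top = unit_cube"
  by (simp add: cube_top_def)

lemma unit_cube_cbox: "unit_cube = cbox 0 (1::real^'n)"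
  by (simp add: unit_cube_def interval_cart)

lemma openin_cube_top_unit_cube: "openin cube_top unit_cube"
  using openin_topspace[of cube_top] by (simp add: topspace_cube_top)

lemma openin_cube_ball: "openin cube_top (ball p r \<inter> unit_cube)"
proof -
  have "openin (top_of_set unit_cube) (unit_cube \<inter> ball p r)"
    by (rule openin_open_Int) simp
  then show ?thesis by (simp add: cube_top_def Int_commute)
qed

lemma convex_cube_ball: "convex (ball p r \<inter> unit_cube)"
  unfolding unit_cube_cbox by (simp add: convex_Int)

lemma openin_cube_balls:
  assumes V: "openin cube_top V" and y: "y \<in> V"
  obtains r where "0 < r" "ball y r \<inter> unit_cube \<subseteq> V"
  using assms unfolding cube_top_def openin_contains_ball by blast

lemma openin_cube_union_balls:
  assumes V: "openin cube_top V"
  shows "\<Union>{ball p r \<inter> unit_cube | p r. ball p r \<inter> unit_cube \<subseteq> V} = V"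
proof
  show "V \<subseteq> \<Union>{ball p r \<inter> unit_cube | p r. ball p r \<inter> unit_cube \<subseteq> V}"
  proof
    fix z assume z: "z \<in> V"
    then obtain r where r: "0 < r" "ball z r \<inter> unit_cube \<subseteq> V"
      using V openin_cube_balls by blast
    have "z \<in> unit_cube" using z V openin_subset topspace_cube_top by blast
    then have "z \<in> ball z r \<inter> unit_cube" using r(1) by simp
    then show "z \<in> \<Union>{ball p r \<inter> unit_cube | p r. ball p r \<inter> unit_cube \<subseteq> V}"
      using r(2) by blast
  qed
qed blast

section \<open>The segment circulation\<close>

text \<open>Directed segments in V, and the segment circulation generated by them; it will turn
  out to be the product circulation of the directed cube.\<close>

definition dir_seg :: "(real^'n) set \<Rightarrow> ((real^'n) \<times> (real^'n)) set" where
  "dir_seg V = {(a, b). a \<le> b \<and> closed_segment a b \<subseteq> V}"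

definition seg_circ :: "(real^'n) set \<Rightarrow> real^'n \<Rightarrow> real^'n \<Rightarrow> bool" where
  "seg_circ V x y \<longleftrightarrow> openin cube_top V \<and> x \<in> V \<and> (x, y) \<in> (dir_seg V)\<^sup>*"

lemma dir_seg_chain_le: "(x, y) \<in> (dir_seg V)\<^sup>* \<Longrightarrow> x \<le> y"
  by (induction rule: rtrancl_induct) (auto simp: dir_seg_def)

lemma dir_seg_chain_mem: "(x, y) \<in> (dir_seg V)\<^sup>* \<Longrightarrow> x \<in> V \<Longrightarrow> y \<in> V"
  by (induction rule: rtrancl_induct) (auto simp: dir_seg_def)

lemma dir_seg_chain_mono: "V \<subseteq> W \<Longrightarrow> (x, y) \<in> (dir_seg V)\<^sup>* \<Longrightarrow> (x, y) \<in> (dir_seg W)\<^sup>*"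
  by (rule rtrancl_mono[THEN subsetD]) (auto simp: dir_seg_def)

text \<open>A continuous monotone path through a union of relatively open sets is a chain of
  directed segments, each contained in one of the sets: small pieces of the path lie in
  a convex piece ball \<inter> cube of one of the sets, which contains the segment between the
  endpoints of the piece.\<close>

lemma monotone_path_chain:
  fixes \<gamma> :: "real \<Rightarrow> real^'n"
  assumes cont: "continuous_on {s..t} \<gamma>" and st: "s \<le> t"
    and mono: "\<And>u w. s \<le> u \<Longrightarrow> u \<le> w \<Longrightarrow> w \<le> t \<Longrightarrow> \<gamma> u \<le> \<gamma> w"
    and img: "\<gamma> ` {s..t} \<subseteq> \<Union>\<O>" and opn: "\<And>V. V \<in> \<O> \<Longrightarrow> openin cube_top V"
  shows "(\<gamma> s, \<gamma> t) \<in> (\<Union>V\<in>\<O>. dir_seg V)\<^sup>*"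
proof -
  define \<U> where "\<U> = {ball x r | x r. \<exists>V\<in>\<O>. ball x r \<inter> unit_cube \<subseteq> V}"
  have cover: "\<gamma> ` {s..t} \<subseteq> \<Union>\<U>"
  proof
    fix y assume "y \<in> \<gamma> ` {s..t}"
    then obtain V where V: "V \<in> \<O>" "y \<in> V" using img by blast
    then obtain r where r: "0 < r" "ball y r \<inter> unit_cube \<subseteq> V"
      using opn openin_cube_balls by metis
    then have "ball y r \<in> \<U>" using V(1) unfolding \<U>_def by blast
    then show "y \<in> \<Union>\<U>" using r(1) centre_in_ball by blast
  qed
  have open_cover: "open U" if "U \<in> \<U>" for U using that by (auto simp: \<U>_def)
  have in_cube: "\<Union>\<O> \<subseteq> unit_cube"
    using opn openin_subset[of cube_top] unfolding topspace_cube_top by blast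
  have "(\<gamma> u, \<gamma> w) \<in> (\<Union>V\<in>\<O>. dir_seg V)"
    if uw: "s \<le> u" "u \<le> w" "w \<le> t" and U: "U \<in> \<U>" "\<gamma> ` {u..w} \<subseteq> U" for u w U
  proof -
    obtain x r V where V: "V \<in> \<O>" "U = ball x r" "ball x r \<inter> unit_cube \<subseteq> V"
      using U(1) by (auto simp: \<U>_def)
    have "u \<in> {s..t}" "w \<in> {s..t}" using uw by auto
    then have "\<gamma> u \<in> \<Union>\<O>" "\<gamma> w \<in> \<Union>\<O>" using img by blast+
    moreover have "\<gamma> u \<in> U" "\<gamma> w \<in> U" using U(2) uw by auto
    ultimately have "\<gamma> u \<in> ball x r \<inter> unit_cube" "\<gamma> w \<in> ball x r \<inter> unit_cube"
      using in_cube V(2) by auto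
    then have "closed_segment (\<gamma> u) (\<gamma> w) \<subseteq> V"
      using closed_segment_subset[OF _ _ convex_cube_ball] V(3) by blast
    then show ?thesis
      using V(1) mono uw unfolding dir_seg_def by blast
  qed
  then show ?thesis
    using path_chain_by_cover[OF cont st cover open_cover] by blast
qed

lemma dir_seg_refine:
  assumes opn: "\<And>V. V \<in> \<O> \<Longrightarrow> openin cube_top V" and yz: "(y, z) \<in> dir_seg (\<Union>\<O>)"
  shows "(y, z) \<in> (\<Union>V\<in>\<O>. dir_seg V)\<^sup>*"
proof -
  define \<gamma> where "\<gamma> u = (1 - u) *\<^sub>R y + u *\<^sub>R z" for u :: real
  have le: "y \<le> z" and seg: "closed_segment y z \<subseteq> \<Union>\<O>" using yz by (auto simp: dir_seg_def)
  have cont: "continuous_on {0..1} \<gamma>" unfolding \<gamma>_def by (intro continuous_intros)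
  have "\<gamma> u \<in> closed_segment y z" if "u \<in> {0..1}" for u
    using that unfolding \<gamma>_def closed_segment_def by auto
  then have img: "\<gamma> ` {0..1} \<subseteq> \<Union>\<O>" using seg by auto
  have mono: "\<gamma> u \<le> \<gamma> w" if "u \<le> w" for u w
  proof -
    have "\<gamma> v $ i = y$i + v * (z$i - y$i)" for v i by (simp add: \<gamma>_def algebra_simps)
    moreover have "u * (z$i - y$i) \<le> w * (z$i - y$i)" for i
      using le that by (intro mult_right_mono) (auto simp: less_eq_vec_def)
    ultimately show ?thesis by (simp add: less_eq_vec_def)
  qed
  have "(\<gamma> 0, \<gamma> 1) \<in> (\<Union>V\<in>\<O>. dir_seg V)\<^sup>*"
    by (rule monotone_path_chain[OF cont _ _ img opn]) (auto intro: mono)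
  then show ?thesis by (simp add: \<gamma>_def)
qed

lemma seg_circ_union:
  assumes opn: "\<And>V. V \<in> \<O> \<Longrightarrow> openin cube_top V" and x: "x \<in> \<Union>\<O>"
    and xy: "(x, y) \<in> (dir_seg (\<Union>\<O>))\<^sup>*"
  shows "(x, y) \<in> (Id_on (\<Union>\<O>) \<union> (\<Union>V\<in>\<O>. {(a, b). seg_circ V a b}))\<^sup>+"
    (is "_ \<in> ?R\<^sup>+")
proof -
  have "(a, b) \<in> ?R" if V: "V \<in> \<O>" and ab: "(a, b) \<in> dir_seg V" for V a b
  proof -
    have "a \<in> V" using ab by (auto simp: dir_seg_def)
    then have "seg_circ V a b" using opn[OF V] ab by (simp add: seg_circ_def)
    then show ?thesis using V by blast
  qed
  then have "(\<Union>V\<in>\<O>. dir_seg V) \<subseteq> ?R" by blast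
  then have "(\<Union>V\<in>\<O>. dir_seg V)\<^sup>* \<subseteq> ?R\<^sup>*" by (rule rtrancl_mono)
  then have "dir_seg (\<Union>\<O>) \<subseteq> ?R\<^sup>*"
    using dir_seg_refine[OF opn] by auto
  then have "(x, y) \<in> ?R\<^sup>*"
    using xy rtrancl_subset_rtrancl by blast
  moreover have "(x, x) \<in> ?R" using x by blast
  ultimately show ?thesis by (rule rtrancl_into_trancl2[rotated])
qed

lemma seg_circ_circulation: "circulation cube_top seg_circ"
  unfolding circulation_def
proof (rule conjI)
  show "\<forall>V x y. seg_circ V x y \<longrightarrow> openin cube_top V \<and> x \<in> V \<and> y \<in> V"
    using dir_seg_chain_mem by (auto simp: seg_circ_def)
next
  show "\<forall>\<O>. (\<forall>V\<in>\<O>. openin cube_top V) \<longrightarrow>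
          {(x, y). seg_circ (\<Union>\<O>) x y} = (Id_on (\<Union>\<O>) \<union> (\<Union>V\<in>\<O>. {(x, y). seg_circ V x y}))\<^sup>+"
  proof (intro allI impI)
    fix \<O> :: "(real^'n) set set" assume opn: "\<forall>V\<in>\<O>. openin cube_top V"
    let ?R = "Id_on (\<Union>\<O>) \<union> (\<Union>V\<in>\<O>. {(x, y). seg_circ V x y})"
    let ?S = "{(x, y). seg_circ (\<Union>\<O>) x y}"
    have open_union: "openin cube_top (\<Union>\<O>)" using opn by auto
    have "?R \<subseteq> ?S"
    proof (rule subrelI)
      fix x y assume "(x, y) \<in> ?R"
      then show "(x, y) \<in> ?S"
      proof
        assume "(x, y) \<in> Id_on (\<Union>\<O>)"
        then show ?thesis using open_union by (auto simp: seg_circ_def)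
      next
        assume "(x, y) \<in> (\<Union>V\<in>\<O>. {(x, y). seg_circ V x y})"
        then obtain V where "V \<in> \<O>" "seg_circ V x y" by blast
        then show ?thesis
          using open_union dir_seg_chain_mono[of V "\<Union>\<O>"] by (auto simp: seg_circ_def)
      qed
    qed
    then have "?R\<^sup>+ \<subseteq> ?S\<^sup>+" using trancl_mono by blast
    moreover have "trans ?S" by (rule transI) (auto simp: seg_circ_def)
    ultimately have "?R\<^sup>+ \<subseteq> ?S" by simp
    moreover have "?S \<subseteq> ?R\<^sup>+"
    proof (rule subrelI)
      fix x y assume "(x, y) \<in> ?S"
      then have "x \<in> \<Union>\<O>" "(x, y) \<in> (dir_seg (\<Union>\<O>))\<^sup>*" by (auto simp: seg_circ_def)
      then show "(x, y) \<in> ?R\<^sup>+" using seg_circ_union opn by blast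
    qed
    ultimately show "?S = ?R\<^sup>+" by blast
  qed
qed

lemma dir_seg_proj:
  assumes "(z, w) \<in> dir_seg W"
  shows "{z$i..w$i} \<subseteq> (\<lambda>p. p$i) ` W"
proof -
  have "z \<le> w" "closed_segment z w \<subseteq> W" using assms by (auto simp: dir_seg_def)
  moreover have "closed_segment (z$i) (w$i) = (\<lambda>p. p$i) ` closed_segment z w"
    by (rule closed_segment_linear_image[OF bounded_linear.linear[OF bounded_linear_vec_nth]])
  ultimately show ?thesis
    by (metis closed_segment_eq_real_ivl image_mono less_eq_vec_def)
qed

lemma dir_seg_chain_proj:
  assumes "(x, y) \<in> (dir_seg W)\<^sup>*" and "x \<in> W"
  shows "{x$i..y$i} \<subseteq> (\<lambda>p. p$i) ` W"
  using assms(1)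
proof (induction rule: rtrancl_induct)
  case base
  then show ?case using assms(2) by auto
next
  case (step z w)
  have "x$i \<le> z$i" "z$i \<le> w$i"
    using step.hyps dir_seg_chain_le[of x z W] by (auto simp: dir_seg_def less_eq_vec_def)
  then have "{x$i..w$i} \<subseteq> {x$i..z$i} \<union> {z$i..w$i}" by auto
  then show ?case using step.IH dir_seg_proj[OF step.hyps(2)] by blast
qed

lemma seg_circ_projection: "stream_map cube_top seg_circ dint_top dint_circ (\<lambda>x. x$i)"
  unfolding stream_map_def
proof (intro conjI allI impI)
  show "continuous_map cube_top dint_top (\<lambda>x. x$i)"
    unfolding cube_top_def dint_top_def continuous_map_subtopology_eu
    by (auto simp: unit_cube_def continuous_on_component[OF continuous_on_id])
next
  fix U x y
  assume U: "openin dint_top U" and xy: "seg_circ ((\<lambda>x. x$i) -` U \<inter> topspace cube_top) x y"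
  let ?W = "(\<lambda>x. x$i) -` U \<inter> topspace cube_top"
  have "x \<in> ?W" and chain: "(x, y) \<in> (dir_seg ?W)\<^sup>*" using xy by (auto simp: seg_circ_def)
  then have "{x$i..y$i} \<subseteq> (\<lambda>p. p$i) ` ?W" by (rule dir_seg_chain_proj[rotated])
  moreover have "(\<lambda>p. p$i) ` ?W \<subseteq> U" by auto
  moreover have "x$i \<le> y$i" using dir_seg_chain_le[OF chain] by (simp add: less_eq_vec_def)
  ultimately show "dint_circ U (x$i) (y$i)"
    using U by (auto simp: dint_circ_def)
qed

lemma seg_circ_product: "product_circ seg_circ"
  unfolding product_circ_def using seg_circ_circulation seg_circ_projection by blast

section \<open>The segment circulation is the product circulation\<close>

lemma circulation_rel:
  "circulation X C \<Longrightarrow> C V x y \<Longrightarrow> openin X V \<and> x \<in> V \<and> y \<in> V"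
  unfolding circulation_def by blast

lemma circulation_union:
  "circulation X C \<Longrightarrow> (\<And>V. V \<in> \<O> \<Longrightarrow> openin X V) \<Longrightarrow>
     {(x, y). C (\<Union>\<O>) x y} = (Id_on (\<Union>\<O>) \<union> (\<Union>V\<in>\<O>. {(x, y). C V x y}))\<^sup>+"
  unfolding circulation_def by blast

text \<open>A circulation is monotone in the open set: apply the gluing axiom to the family {V, W}.\<close>

lemma circulation_mono:
  assumes C: "circulation X C" and xy: "C V x y" and W: "openin X W" "V \<subseteq> W"
  shows "C W x y"
proof -
  have opens: "openin X U" if "U \<in> {V, W}" for U
    using that W(1) circulation_rel[OF C xy] by blast
  let ?R = "Id_on (\<Union>{V, W}) \<union> (\<Union>U\<in>{V, W}. {(a, b). C U a b})"
  have "(x, y) \<in> ?R\<^sup>+" using xy by blast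
  then have "(x, y) \<in> {(a, b). C (\<Union>{V, W}) a b}" by (subst circulation_union[OF C opens])
  then show ?thesis using W(2) by (simp add: Un_absorb1)
qed

text \<open>Any circulation making the projections stream maps only relates coordinatewise
  ordered points: enlarge the open set to the whole cube and project.\<close>

lemma product_circ_le:
  fixes x y :: "real^'n"
  assumes P: "product_circ C" and xy: "C V x y"
  shows "x \<le> y"
proof -
  have C: "circulation cube_top C" and proj: "stream_map cube_top C dint_top dint_circ (\<lambda>x. x$i)" for i
    using P by (auto simp: product_circ_def)
  have "V \<subseteq> unit_cube"
    using circulation_rel[OF C xy] openin_subset topspace_cube_top by blast
  then have "C unit_cube x y"
    using circulation_mono[OF C xy openin_cube_top_unit_cube] by blast
  moreover have pre: "(\<lambda>x. x$i) -` {0..1} \<inter> topspace cube_top = unit_cube" for i :: 'n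
    by (auto simp: topspace_cube_top unit_cube_def)
  ultimately have "C ((\<lambda>x. x$i) -` {0..1} \<inter> topspace cube_top) x y" for i
    unfolding pre by blast
  moreover have "openin dint_top {0..1}" by (simp add: dint_top_def)
  ultimately have "dint_circ {0..1} (x$i) (y$i)" for i
    using proj[of i] unfolding stream_map_def by blast
  then show ?thesis by (simp add: dint_circ_def less_eq_vec_def)
qed

text \<open>Maximality: write V as the union of its convex pieces ball \<inter> cube; by the gluing axiom
  C on V is generated by C on the pieces, and on a convex piece every C-related pair is a
  directed segment.\<close>

lemma product_circ_below_seg_circ:
  assumes P: "product_circ C" and xy: "C V x y"
  shows "seg_circ V x y"
proof -
  have C: "circulation cube_top C" using P by (simp add: product_circ_def)
  have V: "openin cube_top V" "x \<in> V" using circulation_rel[OF C xy] by auto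
  define \<O> where "\<O> = {ball p r \<inter> unit_cube | p r. ball p r \<inter> unit_cube \<subseteq> V}"
  let ?R = "Id_on V \<union> (\<Union>W\<in>\<O>. {(a, b). C W a b})"
  have "{(a, b). C (\<Union>\<O>) a b} = (Id_on (\<Union>\<O>) \<union> (\<Union>W\<in>\<O>. {(a, b). C W a b}))\<^sup>+"
    by (rule circulation_union[OF C]) (auto simp: \<O>_def openin_cube_ball)
  then have generated: "{(a, b). C V a b} = ?R\<^sup>+"
    using openin_cube_union_balls[OF V(1)] unfolding \<O>_def by simp
  have "(a, b) \<in> dir_seg V" if "W \<in> \<O>" "C W a b" for W a b
  proof -
    obtain p r where W: "W = ball p r \<inter> unit_cube" "W \<subseteq> V" using \<open>W \<in> \<O>\<close> by (auto simp: \<O>_def)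
    have "a \<in> W" "b \<in> W" using circulation_rel[OF C \<open>C W a b\<close>] by auto
    then have "closed_segment a b \<subseteq> V"
      using closed_segment_subset[OF _ _ convex_cube_ball] W by blast
    moreover have "a \<le> b" using product_circ_le[OF P \<open>C W a b\<close>] .
    ultimately show ?thesis by (simp add: dir_seg_def)
  qed
  then have "?R \<subseteq> (dir_seg V)\<^sup>*" by auto
  then have "?R\<^sup>+ \<subseteq> ((dir_seg V)\<^sup>*)\<^sup>+" using trancl_mono by blast
  then have "(x, y) \<in> (dir_seg V)\<^sup>*" using xy generated by auto
  then show ?thesis using V by (simp add: seg_circ_def)
qed

lemma cube_circ_eq_seg_circ: "cube_circ = (seg_circ :: (real^'n) set \<Rightarrow> _)"
  unfolding cube_circ_def
proof (rule the_equality)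
  show "product_circ seg_circ \<and> (\<forall>C'. product_circ C' \<longrightarrow> (\<forall>V x y. C' V x y \<longrightarrow> seg_circ V x y))"
    using seg_circ_product product_circ_below_seg_circ by blast
next
  fix C :: "(real^'n) set \<Rightarrow> real^'n \<Rightarrow> real^'n \<Rightarrow> bool"
  assume C: "product_circ C \<and> (\<forall>C'. product_circ C' \<longrightarrow> (\<forall>V x y. C' V x y \<longrightarrow> C V x y))"
  show "C = seg_circ"
    using C seg_circ_product product_circ_below_seg_circ by (intro ext iffI) blast+
qed

lemma dipath_iff_monotone:
  fixes \<gamma> :: "real \<Rightarrow> real^'n"
  shows "dipath \<gamma> \<longleftrightarrow> continuous_on {0..1} \<gamma> \<and> \<gamma> ` {0..1} \<subseteq> unit_cube \<and>
           (\<forall>s t. 0 \<le> s \<longrightarrow> s \<le> t \<longrightarrow> t \<le> 1 \<longrightarrow> \<gamma> s \<le> \<gamma> t)"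
    (is "_ \<longleftrightarrow> ?cont \<and> ?img \<and> ?mono")
proof
  assume "dipath \<gamma>"
  then have cm: "continuous_map dint_top cube_top \<gamma>"
    and sm: "\<And>V s t. openin cube_top V \<Longrightarrow> dint_circ (\<gamma> -` V \<inter> topspace dint_top) s t
               \<Longrightarrow> seg_circ V (\<gamma> s) (\<gamma> t)"
    by (auto simp: dipath_def stream_map_def cube_circ_eq_seg_circ)
  from cm have cont: ?cont and img: ?img
    by (auto simp: dint_top_def cube_top_def)
  have "\<gamma> -` unit_cube \<inter> topspace dint_top = {0..1}" using img by (auto simp: dint_top_def)
  then have "seg_circ unit_cube (\<gamma> s) (\<gamma> t)" if "0 \<le> s" "s \<le> t" "t \<le> 1" for s t
    using sm[OF openin_cube_top_unit_cube, of s t] that by (simp add: dint_circ_def dint_top_def)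
  then have ?mono by (auto simp: seg_circ_def dest: dir_seg_chain_le)
  with cont img show "?cont \<and> ?img \<and> ?mono" by blast
next
  assume h: "?cont \<and> ?img \<and> ?mono"
  show "dipath \<gamma>"
    unfolding dipath_def cube_circ_eq_seg_circ stream_map_def
  proof (intro conjI allI impI)
    show "continuous_map dint_top cube_top \<gamma>"
      using h by (simp add: dint_top_def cube_top_def image_subset_iff_funcset)
    fix V s t
    assume V: "openin cube_top V" and st: "dint_circ (\<gamma> -` V \<inter> topspace dint_top) s t"
    then have le: "s \<le> t" and sub: "{s..t} \<subseteq> {0..1}" "\<gamma> ` {s..t} \<subseteq> V"
      by (auto simp: dint_circ_def dint_top_def)
    have "(\<gamma> s, \<gamma> t) \<in> (\<Union>W\<in>{V}. dir_seg W)\<^sup>*"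
    proof (rule monotone_path_chain[OF _ le])
      show "continuous_on {s..t} \<gamma>" using h sub(1) continuous_on_subset by blast
      show "\<gamma> u \<le> \<gamma> w" if "s \<le> u" "u \<le> w" "w \<le> t" for u w
        using h that sub(1) by auto
    qed (use sub(2) V in auto)
    moreover have "\<gamma> s \<in> V" using sub(2) le by auto
    ultimately show "seg_circ V (\<gamma> s) (\<gamma> t)" using V by (simp add: seg_circ_def)
  qed
qed

section \<open>Staircase paths between comparable vertices\<close>

definition clamp01 :: "real \<Rightarrow> real" where
  "clamp01 u = max 0 (min 1 u)"

text \<open>With N = CARD('n), the staircase path moves coordinate i linearly from v$i to w$i
  during the time interval [e i / N, (e i + 1) / N].\<close>

definition staircase :: "('n \<Rightarrow> nat) \<Rightarrow> real^'n \<Rightarrow> real^'n \<Rightarrow> real \<Rightarrow> real^'n" where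
  "staircase e v w t = (\<chi> i. v$i + (w$i - v$i) * clamp01 (real CARD('n) * t - real (e i)))"

lemma clamp01_mono: "u \<le> u' \<Longrightarrow> clamp01 u \<le> clamp01 u'"
  by (simp add: clamp01_def)

locale staircase_data =
  fixes e :: "'n::finite \<Rightarrow> nat" and v w :: "real^'n"
  assumes e_inj: "inj e" and e_bound: "\<And>i. e i < CARD('n)"
    and v: "v \<in> cube_vertices" and w: "w \<in> cube_vertices" and v_le_w: "v \<le> w"
begin

abbreviation "\<beta> \<equiv> staircase e v w"

lemma staircase_nth: "\<beta> t $ i = v$i + (w$i - v$i) * clamp01 (real CARD('n) * t - real (e i))"
  by (simp add: staircase_def)

lemma coordinate_cases: "(v$i = 0 \<and> w$i = 0) \<or> (v$i = 1 \<and> w$i = 1) \<or> (v$i = 0 \<and> w$i = 1)"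
proof -
  have "v$i = 0 \<or> v$i = 1" "w$i = 0 \<or> w$i = 1" "v$i \<le> w$i"
    using v w v_le_w by (auto simp: cube_vertices_def less_eq_vec_def)
  then show ?thesis by auto
qed

lemma staircase_start: "\<beta> 0 = v"
  by (simp add: vec_eq_iff staircase_nth clamp01_def)

lemma staircase_end: "\<beta> 1 = w"
proof -
  have "clamp01 (real CARD('n) - real (e i)) = 1" for i
    using e_bound[of i] by (simp add: clamp01_def)
  then show ?thesis by (simp add: vec_eq_iff staircase_nth)
qed

lemma staircase_continuous: "continuous_on S \<beta>"
  unfolding staircase_def clamp01_def by (intro continuous_on_vec_lambda continuous_intros)

lemma staircase_mono: "s \<le> t \<Longrightarrow> \<beta> s \<le> \<beta> t"
proof -
  assume "s \<le> t"
  then have "real CARD('n) * s - real (e i) \<le> real CARD('n) * t - real (e i)" for i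
    by (simp add: mult_left_mono)
  then have "clamp01 (real CARD('n) * s - real (e i)) \<le> clamp01 (real CARD('n) * t - real (e i))" for i
    by (rule clamp01_mono)
  moreover have "0 \<le> w$i - v$i" for i using v_le_w by (simp add: less_eq_vec_def)
  ultimately show ?thesis by (simp add: less_eq_vec_def staircase_nth mult_left_mono)
qed

lemma staircase_in_cube: "\<beta> t \<in> unit_cube"
  unfolding unit_cube_def
proof (intro CollectI allI)
  fix i
  let ?c = "clamp01 (real CARD('n) * t - real (e i))"
  have "0 \<le> ?c" "?c \<le> 1" by (auto simp: clamp01_def)
  then show "0 \<le> \<beta> t $ i \<and> \<beta> t $ i \<le> 1"
    using coordinate_cases[of i] by (auto simp: staircase_nth)
qed

text \<open>A coordinate strictly between 0 and 1 at time t must satisfy e i < N t < e i + 1;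
  since e is injective there is at most one such coordinate.\<close>

lemma staircase_in_skeleton: "\<beta> t \<in> cube_skel1"
proof -
  let ?S = "{i. \<beta> t $ i \<noteq> 0 \<and> \<beta> t $ i \<noteq> 1}"
  have moving: "real (e i) < real CARD('n) * t \<and> real CARD('n) * t < real (e i) + 1" if "i \<in> ?S" for i
  proof -
    let ?u = "real CARD('n) * t - real (e i)"
    have "v$i = 0 \<and> w$i = 1" using coordinate_cases[of i] that by (auto simp: staircase_nth)
    then have "clamp01 ?u \<noteq> 0" "clamp01 ?u \<noteq> 1" using that by (auto simp: staircase_nth)
    then have "0 < ?u \<and> ?u < 1" unfolding clamp01_def by (simp add: max_def min_def split: if_splits)
    then show ?thesis by linarith
  qed
  have "i = j" if "i \<in> ?S" "j \<in> ?S" for i j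
  proof -
    have "e i = e j" using moving[OF that(1)] moving[OF that(2)] by linarith
    then show ?thesis using e_inj by (simp add: inj_eq)
  qed
  then have "card ?S \<le> 1" using card_le_Suc0_iff_eq[of ?S] by auto
  then show ?thesis using staircase_in_cube by (simp add: cube_skel1_def)
qed

lemma staircase_dipath: "dipath \<beta>"
  using staircase_continuous staircase_in_cube staircase_mono by (auto simp: dipath_iff_monotone)

lemma staircase_cellular: "cellular_path \<beta>"
  using v w staircase_start staircase_end staircase_in_skeleton by (auto simp: cellular_path_def)

end

lemma cellular_dipath_between_vertices:
  fixes v w :: "real^'n"
  assumes "v \<in> cube_vertices" "w \<in> cube_vertices" "v \<le> w"
  obtains \<beta> where "dipath \<beta>" "\<beta> 0 = v" "\<beta> 1 = w" "cellular_path \<beta>"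
proof -
  obtain e :: "'n \<Rightarrow> nat" where "bij_betw e UNIV {0..<CARD('n)}"
    using ex_bij_betw_finite_nat[of "UNIV :: 'n set"] by auto
  then have e: "inj e" "\<And>i. e i < CARD('n)" by (auto simp: bij_betw_def)
  interpret staircase_data e v w by unfold_locales (use assms e in auto)
  show ?thesis by (rule that[OF staircase_dipath staircase_start staircase_end staircase_cellular])
qed

lemma vtx_vertex: "vtx x \<in> cube_vertices"
  by (simp add: vtx_def cube_vertices_def)

lemma vtx_mono:
  assumes "x \<le> y" "y \<in> unit_cube"
  shows "vtx x \<le> vtx y"
proof -
  have "x$i \<le> y$i" "y$i \<le> 1" for i
    using assms by (auto simp: less_eq_vec_def unit_cube_def)
  then have "vtx x $ i \<le> vtx y $ i" for i
    by (simp add: vtx_def) (metis order.antisym)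
  then show ?thesis by (simp add: less_eq_vec_def)
qed

text \<open>If an interior point lies between x and a boundary point y, then y has a coordinate
  equal to 1 at which x is below 1, so x and y have different vertices.\<close>

lemma vtx_distinct:
  assumes "x \<le> m" "m \<le> y" "m \<in> cube_interior" "y \<in> cube_boundary"
  shows "vtx x \<noteq> vtx y"
proof -
  obtain j where j: "y$j = 0 \<or> y$j = 1" using assms(4) by (auto simp: cube_boundary_def)
  have "x$j \<le> m$j" "m$j \<le> y$j" "0 < m$j" "m$j < 1"
    using assms(1-3) by (auto simp: less_eq_vec_def cube_interior_def)
  then have "y$j = 1" "x$j \<noteq> 1" using j by auto
  then have "vtx x $ j \<noteq> vtx y $ j" by (simp add: vtx_def)
  then show ?thesis by metis
qed

theorem mainTheorem7:
  fixes \<alpha> :: "real \<Rightarrow> real^'n"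
  assumes "dipath \<alpha>"
  shows "\<exists>\<beta> :: real \<Rightarrow> real^'n. dipath \<beta> \<and> \<beta> 0 = vtx (\<alpha> 0) \<and> \<beta> 1 = vtx (\<alpha> 1) \<and>
           cellular_path \<beta> \<and>
           ((\<alpha> 0 \<in> cube_boundary \<and> \<alpha> 1 \<in> cube_boundary \<and> \<alpha> (1/2) \<in> cube_interior)
              \<longrightarrow> (\<exists>s\<in>{0..1}. \<exists>t\<in>{0..1}. \<beta> s \<noteq> \<beta> t))"
proof -
  have img: "\<alpha> ` {0..1} \<subseteq> unit_cube"
    and mono: "\<And>s t. 0 \<le> s \<Longrightarrow> s \<le> t \<Longrightarrow> t \<le> 1 \<Longrightarrow> \<alpha> s \<le> \<alpha> t"
    using assms by (auto simp: dipath_iff_monotone)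
  have "\<alpha> 1 \<in> unit_cube" using img by auto
  then have "vtx (\<alpha> 0) \<le> vtx (\<alpha> 1)" using mono[of 0 1] by (simp add: vtx_mono)
  then obtain \<beta> where \<beta>: "dipath \<beta>" "\<beta> 0 = vtx (\<alpha> 0)" "\<beta> 1 = vtx (\<alpha> 1)" "cellular_path \<beta>"
    using cellular_dipath_between_vertices vtx_vertex by blast
  have "\<beta> 0 \<noteq> \<beta> 1" if "\<alpha> 1 \<in> cube_boundary" "\<alpha> (1/2) \<in> cube_interior"
    using vtx_distinct[OF mono[of 0 "1/2"] mono[of "1/2" 1]] that \<beta>(2,3) by simp
  moreover have "(0::real) \<in> {0..1}" "(1::real) \<in> {0..1}" by auto
  ultimately show ?thesis using \<beta> by blast
qed

end
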